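(* For every integer $h\ge2$, the numerical semigroup $\Gamma_{A_h}=\langle h(h+1),\,h(h+1)+1,\,(h+1)^2,\,(h+1)^2+1\rangle$ is homogeneous.
   Context: For a numerical semigroup $\Gamma=\langle n_1,\dots,n_e\rangle$ (minimally generated, here with $n_1=h(h+1)$) and $0\neq s\in\Gamma$, the set of lengths is $\mathcal T(s)=\{\sum_i r_i : s=\sum_i r_in_i,\ r_i\in\mathbb{N}\}$. A subset $T\subset\Gamma$ is homogeneous if it is empty or $\mathcal T(s)$ is a singleton for all $0\neq s\in T$. $\Gamma$ is homogeneous if the Apéry set $\mathrm{Ap}(\Gamma,n_1)=\{s\in\Gamma: s-n_1\notin\Gamma\}$ is homogeneous. *)

theory Defs
  imports Main
begin

text \<open>A numerical semigroup is given by its (minimal) list of generators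
  ns = [n_1, ..., n_e].  A factorization of s is a list r of natural numbers
  of the same length with s = sum_i r_i n_i.\<close>

definition factorizations :: "nat list \<Rightarrow> nat \<Rightarrow> nat list set" where
  "factorizations ns s =
     {r. length r = length ns \<and> s = (\<Sum>i<length ns. r ! i * ns ! i)}"

definition semigroup_gen :: "nat list \<Rightarrow> nat set" where
  "semigroup_gen ns = {s. factorizations ns s \<noteq> {}}"

definition lengths :: "nat list \<Rightarrow> nat \<Rightarrow> nat set" where
  "lengths ns s = {sum_list r | r. r \<in> factorizations ns s}"

definition apery :: "nat list \<Rightarrow> nat set" where
  "apery ns = {s \<in> semigroup_gen ns.
                \<not> (hd ns \<le> s \<and> s - hd ns \<in> semigroup_gen ns)}"

definition homogeneous_set :: "nat list \<Rightarrow> nat set \<Rightarrow> bool" where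
  "homogeneous_set ns T \<longleftrightarrow>
     T = {} \<or> (\<forall>s\<in>T. s \<noteq> 0 \<longrightarrow> (\<exists>l. lengths ns s = {l}))"

definition homogeneous_semigroup :: "nat list \<Rightarrow> bool" where
  "homogeneous_semigroup ns \<longleftrightarrow> homogeneous_set ns (apery ns)"

end

theory Submission
  imports Defs
begin

(* With a = h(h+1) the generators are a, a+1, a+h+1, a+h+2, so a factorization (x0,x1,x2,x3)
   of s of length L gives s = L a + e with excess e = x1 + (h+1) x2 + (h+2) x3.  An element of
   the Apery set has no factorization using a, and the exchanges
     (a+1) + (a+h+1) = a + (a+h+2),
     c (a+h+1) + d (a+h+2) = (c+1) a + d (a+1)                  for c + d = h,
     (k+2) (a+1) + x3 (a+h+2) = (k+1) a + (x3+1) (a+h+1)        for h = x3 + k + 1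
   show x1 x2 = 0, x2 + x3 < h and x1 + x3 <= h.  These force e < a, so every factorization
   of s has length s div a. *)

lemma factorizations_Nil: "factorizations [] s = (if s = 0 then {[]} else {})"
  by (auto simp: factorizations_def)

lemma factorizations_Cons:
  "r \<in> factorizations (n # ns) s \<longleftrightarrow>
   (\<exists>x rs t. r = x # rs \<and> rs \<in> factorizations ns t \<and> s = x * n + t)"
  by (cases r) (auto simp: factorizations_def sum.lessThan_Suc_shift simp del: sum.lessThan_Suc)

lemma factorizations_four:
  "r \<in> factorizations [a, b, c, d] s \<longleftrightarrow>
   (\<exists>x0 x1 x2 x3. r = [x0, x1, x2, x3] \<and> s = x0 * a + x1 * b + x2 * c + x3 * d)"
  by (auto simp: factorizations_Cons factorizations_Nil)

lemma apery_factorization_hd_eq_0: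
  assumes "s \<in> apery (n # ns)" and "x # rs \<in> factorizations (n # ns) s"
  shows "x = 0"
proof (rule ccontr)
  assume "x \<noteq> 0"
  then obtain y where "x = Suc y"
    using not0_implies_Suc by blast
  moreover from assms(2) obtain t where "rs \<in> factorizations ns t" "s = x * n + t"
    by (auto simp: factorizations_Cons)
  ultimately have "y # rs \<in> factorizations (n # ns) (s - n)" and "n \<le> s"
    by (auto simp: factorizations_Cons)
  with assms(1) show False
    by (auto simp: apery_def semigroup_gen_def)
qed

lemma lengths_eq_singletonI:
  assumes "s \<in> semigroup_gen ns" and "\<And>r. r \<in> factorizations ns s \<Longrightarrow> sum_list r = l"
  shows "lengths ns s = {l}"
  using assms by (auto simp: lengths_def semigroup_gen_def)

lemma apery_four_coeff0_eq_0:
  assumes "s \<in> apery [a, b, c, d]" and "s = x0 * a + x1 * b + x2 * c + x3 * d"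
  shows "x0 = 0"
proof -
  have "[x0, x1, x2, x3] \<in> factorizations [a, b, c, d] s"
    using assms(2) by (simp add: factorizations_four)
  with assms(1) show ?thesis
    by (rule apery_factorization_hd_eq_0)
qed

lemma apery_Ah_excess_less:
  fixes h a :: nat
  assumes "0 < h" and a: "a = h * (h + 1)"
    and s_apery: "s \<in> apery [a, a + 1, a + h + 1, a + h + 2]"
    and s: "s = x0 * a + x1 * (a + 1) + x2 * (a + h + 1) + x3 * (a + h + 2)"
  shows "x0 = 0 \<and> x1 + x2 * (h + 1) + x3 * (h + 2) < a"
proof -
  have no_a: "y0 = 0"
    if "s = y0 * a + y1 * (a + 1) + y2 * (a + h + 1) + y3 * (a + h + 2)" for y0 y1 y2 y3
    using s_apery that by (rule apery_four_coeff0_eq_0)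
  have x0: "x0 = 0"
    using s by (rule no_a)
  have x1_x2: "x1 = 0 \<or> x2 = 0"
  proof (rule ccontr)
    assume "\<not> (x1 = 0 \<or> x2 = 0)"
    then obtain y1 y2 where "x1 = Suc y1" "x2 = Suc y2"
      by (metis not0_implies_Suc)
    with s x0 have "s = Suc 0 * a + y1 * (a + 1) + y2 * (a + h + 1) + Suc x3 * (a + h + 2)"
      by (simp add: algebra_simps)
    then show False
      using no_a by blast
  qed
  have x2_x3: "x2 + x3 < h"
  proof (rule ccontr)
    assume "\<not> x2 + x3 < h"
    then have "h = (h - min x3 h) + min x3 h" "x2 = (h - min x3 h) + (x2 - (h - min x3 h))"
      "x3 = min x3 h + (x3 - min x3 h)"
      by auto
    then obtain c d y2 y3 where h: "h = c + d" and "x2 = c + y2" "x3 = d + y3"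
      by blast
    with s x0 a have "s = Suc c * a + (x1 + d) * (a + 1) + y2 * (a + h + 1) + y3 * (a + h + 2)"
      by (simp add: algebra_simps)
    then show False
      using no_a by blast
  qed
  have x1_x3: "x1 + x3 \<le> h"
  proof (rule ccontr)
    assume "\<not> x1 + x3 \<le> h"
    from x2_x3 obtain k where h: "h = Suc (x3 + k)"
      using less_imp_Suc_add by fastforce
    with \<open>\<not> x1 + x3 \<le> h\<close> have "x1 = k + 2 + (x1 - (k + 2))"
      by simp
    then obtain y1 where "x1 = k + 2 + y1"
      by blast
    with s x0 a h have "s = Suc k * a + y1 * (a + 1) + (x2 + x3 + 1) * (a + h + 1) + 0 * (a + h + 2)"
      by (simp add: algebra_simps)
    then show False
      using no_a by blast
  qed
  have "x1 + x2 * (h + 1) + x3 * (h + 2) < a"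
    using x1_x2
  proof
    assume "x1 = 0"
    have "x2 * (h + 1) + x3 * (h + 2) \<le> (x2 + x3) * (h + 2)"
      by (simp add: algebra_simps)
    also have "\<dots> \<le> (h - 1) * (h + 2)"
      using x2_x3 by (intro mult_le_mono1) simp
    also have "\<dots> < a"
      using \<open>0 < h\<close> a by (cases h) (simp_all add: algebra_simps)
    finally show ?thesis
      using \<open>x1 = 0\<close> by simp
  next
    assume "x2 = 0"
    have "x1 + x3 * (h + 2) = (x1 + x3) + x3 * (h + 1)"
      by (simp add: algebra_simps)
    also have "\<dots> \<le> h + (h - 1) * (h + 1)"
      using x1_x3 x2_x3 \<open>x2 = 0\<close> by (intro add_mono mult_le_mono1) simp_all
    also have "\<dots> < a"
      using \<open>0 < h\<close> a by (cases h) (simp_all add: algebra_simps)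
    finally show ?thesis
      using \<open>x2 = 0\<close> by simp
  qed
  with x0 show ?thesis ..
qed

lemma apery_Ah_factorization_length:
  fixes h a :: nat
  assumes "0 < h" and a: "a = h * (h + 1)"
    and "s \<in> apery [a, a + 1, a + h + 1, a + h + 2]"
    and "r \<in> factorizations [a, a + 1, a + h + 1, a + h + 2] s"
  shows "sum_list r = s div a"
proof -
  obtain x0 x1 x2 x3 where r: "r = [x0, x1, x2, x3]"
    and s: "s = x0 * a + x1 * (a + 1) + x2 * (a + h + 1) + x3 * (a + h + 2)"
    using assms(4) by (auto simp: factorizations_four)
  then have "x0 = 0" and excess: "x1 + x2 * (h + 1) + x3 * (h + 2) < a"
    using apery_Ah_excess_less[OF assms(1-3)] by blast+
  with s have "s = (x1 + x2 + x3) * a + (x1 + x2 * (h + 1) + x3 * (h + 2))"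
    by (simp add: algebra_simps)
  with excess have "s div a = x1 + x2 + x3"
    by simp
  with r \<open>x0 = 0\<close> show ?thesis
    by simp
qed

theorem mainTheorem5:
  fixes h :: nat
  assumes "h \<ge> 2"
  shows "homogeneous_semigroup
           [h * (h + 1), h * (h + 1) + 1, (h + 1)^2, (h + 1)^2 + 1]"
proof -
  define a where "a = h * (h + 1)"
  have gens: "[h * (h + 1), h * (h + 1) + 1, (h + 1)^2, (h + 1)^2 + 1] =
      [a, a + 1, a + h + 1, a + h + 2]"
    by (simp add: a_def power2_eq_square algebra_simps)
  have "lengths [a, a + 1, a + h + 1, a + h + 2] s = {s div a}"
    if "s \<in> apery [a, a + 1, a + h + 1, a + h + 2]" for s
  proof (rule lengths_eq_singletonI)
    show "s \<in> semigroup_gen [a, a + 1, a + h + 1, a + h + 2]"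
      using that by (simp add: apery_def)
    show "sum_list r = s div a" if "r \<in> factorizations [a, a + 1, a + h + 1, a + h + 2] s" for r
      using apery_Ah_factorization_length \<open>h \<ge> 2\<close> a_def
        \<open>s \<in> apery [a, a + 1, a + h + 1, a + h + 2]\<close> that by simp
  qed
  then show ?thesis
    unfolding gens homogeneous_semigroup_def homogeneous_set_def by blast
qed

end
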